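(* Let $\lambda>0$ and $d\ge3$. Then the function $C_\lambda(u_1,\dots,u_d)=\phi_\lambda^{[-1]}(\phi_\lambda(u_1)+\cdots+\phi_\lambda(u_d))$, $u_1,\dots,u_d\in[0,1]$, is not a $d$-dimensional copula.
   Context: For $\lambda\neq-1,0$, $\phi_\lambda(x)=\frac{1}{\lambda(\lambda+1)}(x^{\lambda+1}-x+\lambda(1-x))$ for $x\ge0$; for $\lambda>0$, $\phi_\lambda(0)=1/(\lambda+1)$ and $\phi_\lambda$ is convex and strictly decreasing on $[0,1]$ with $\phi_\lambda(1)=0$. The pseudoinverse is $\phi_\lambda^{[-1]}(t)=\phi_\lambda^{-1}(t)$ (inverse of $\phi_\lambda|_{[0,1]}$) for $0\le t<\phi_\lambda(0)$ and $\phi_\lambda^{[-1]}(t)=0$ for $t\ge\phi_\lambda(0)$. A $d$-dimensional copula is a joint CDF on $[0,1]^d$ with uniform $[0,1]$ margins. *)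

theory Defs
  imports "HOL-Probability.Probability"
begin

definition phi :: "real \<Rightarrow> real \<Rightarrow> real" where
  "phi lam x = (x powr (lam + 1) - x + lam * (1 - x)) / (lam * (lam + 1))"

definition phi_pinv :: "real \<Rightarrow> real \<Rightarrow> real" where
  "phi_pinv lam t = (if t < phi lam 0 then (THE x. x \<in> {0..1} \<and> phi lam x = t) else 0)"

definition C_lam :: "real \<Rightarrow> nat \<Rightarrow> (nat \<Rightarrow> real) \<Rightarrow> real" where
  "C_lam lam d u = phi_pinv lam (\<Sum>i<d. phi lam (u i))"

definition copula :: "nat \<Rightarrow> ((nat \<Rightarrow> real) \<Rightarrow> real) \<Rightarrow> bool" where
  "copula d C \<longleftrightarrow> (\<exists>M. prob_space M \<and>
      sets M = sets (PiM {..<d} (\<lambda>_. (borel :: real measure))) \<and>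
      (\<forall>i<d. \<forall>t\<in>{0..1}. measure M {x \<in> space M. x i \<le> t} = t) \<and>
      (\<forall>u \<in> PiE {..<d} (\<lambda>_. {0..1}). C u = measure M {x \<in> space M. \<forall>i<d. x i \<le> u i}))"

end

(*
  Take y with phi(3y) + phi(0) < 2 phi(y) (y = 3 powr (-(lam+1)/lam) works, as
  then (3y) powr (lam+1) = y), and a <= b with phi(a) = (2 phi(0) - phi(y))/3,
  phi(b) = (2 phi(y) - phi(0))/3.  Place a in one of the first three coordinates,
  b in the other two and 1 in the remaining ones.  The three lower orthants so
  obtained each have mass C(a,b,b) = y, their pairwise intersections are the
  orthants at (a,a,b) of mass pinv(phi(0)) = 0, and all lie below the orthant at
  (b,b,b), whose mass is pinv(2 phi(y) - phi(0)) < 3y.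
*)
theory Submission
  imports Defs
begin

lemma phi_1: "phi lam 1 = 0"
  unfolding phi_def by simp

lemma phi_has_real_derivative:
  assumes "lam > 0" "t > 0"
  shows "(phi lam has_real_derivative (t powr lam - 1) / lam) (at t)"
proof -
  have "((\<lambda>t. t powr (lam + 1)) has_real_derivative (lam + 1) * t powr lam) (at t)"
    using has_real_derivative_powr[OF \<open>t > 0\<close>, of "lam + 1"] by simp
  then have "(phi lam has_real_derivative ((lam + 1) * t powr lam - 1 - lam) / (lam * (lam + 1))) (at t)"
    using assms unfolding phi_def[abs_def] by (auto intro!: derivative_eq_intros)
  moreover have "(lam + 1) * t powr lam - 1 - lam = (lam + 1) * (t powr lam - 1)"
    by (simp add: algebra_simps)
  ultimately show ?thesis
    using assms by simp
qed

lemma continuous_on_phi: "lam > 0 \<Longrightarrow> continuous_on {0..1} (phi lam)"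
  unfolding phi_def by (intro continuous_intros continuous_on_powr') auto

lemma phi_strict_antimono:
  assumes "lam > 0" "0 \<le> x" "x < z" "z \<le> 1"
  shows "phi lam z < phi lam x"
proof (rule DERIV_neg_imp_decreasing_open[OF \<open>x < z\<close>])
  fix t assume "x < t" "t < z"
  with assms have "0 < t" "t < 1" by auto
  then have "t powr lam < 1"
    using powr_less_mono2[OF \<open>lam > 0\<close>, of t 1] by simp
  with \<open>0 < t\<close> \<open>lam > 0\<close> show "\<exists>D. (phi lam has_real_derivative D) (at t) \<and> D < 0"
    by (intro exI[of _ "(t powr lam - 1) / lam"]) (auto intro: phi_has_real_derivative divide_neg_pos)
next
  show "continuous_on {x..z} (phi lam)"
    by (rule continuous_on_subset[OF continuous_on_phi[OF \<open>lam > 0\<close>]]) (use assms in auto)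
qed

lemma phi_antimono:
  "\<lbrakk>lam > 0; 0 \<le> x; x \<le> z; z \<le> 1\<rbrakk> \<Longrightarrow> phi lam z \<le> phi lam x"
  using phi_strict_antimono[of lam x z] by (cases "x = z") auto

lemma phi_nonneg: "\<lbrakk>lam > 0; 0 \<le> x; x \<le> 1\<rbrakk> \<Longrightarrow> 0 \<le> phi lam x"
  using phi_antimono[of lam x 1] by (simp add: phi_1)

lemma phi_inj_on: "lam > 0 \<Longrightarrow> inj_on (phi lam) {0..1}"
proof (rule inj_onI)
  fix x z assume "lam > 0" "x \<in> {0..1}" "z \<in> {0..1}" "phi lam x = phi lam z"
  then show "x = z"
    using phi_strict_antimono[of lam x z] phi_strict_antimono[of lam z x]
    by (cases x z rule: linorder_cases) simp_all
qed

lemma phi_surj_on: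
  assumes "lam > 0" "0 \<le> s" "s \<le> phi lam 0"
  obtains x where "0 \<le> x" "x \<le> 1" "phi lam x = s"
proof -
  have "\<exists>x\<ge>0. x \<le> 1 \<and> phi lam x = s"
    by (rule IVT2') (use assms continuous_on_phi in \<open>simp_all add: phi_1\<close>)
  then show ?thesis
    using that by blast
qed

lemma phi_pinv_phi:
  assumes "lam > 0" "0 < x" "x \<le> 1"
  shows "phi_pinv lam (phi lam x) = x"
proof -
  have "(THE z. z \<in> {0..1} \<and> phi lam z = phi lam x) = x"
  proof (rule the_equality)
    show "z = x" if "z \<in> {0..1} \<and> phi lam z = phi lam x" for z
      using inj_onD[OF phi_inj_on[OF assms(1)], of z x] that assms by simp
  qed (use assms in simp)
  moreover have "phi lam x < phi lam 0"
    using phi_strict_antimono assms by simp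
  ultimately show ?thesis
    unfolding phi_pinv_def by simp
qed

lemma phi_pinv_eq_0: "phi lam 0 \<le> t \<Longrightarrow> phi_pinv lam t = 0"
  unfolding phi_pinv_def by simp

lemma phi_pinv_less:
  assumes "lam > 0" "0 \<le> z" "z \<le> 1" "phi lam z < s" "s < phi lam 0"
  shows "phi_pinv lam s < z"
proof -
  have "0 \<le> s"
    using phi_nonneg[OF assms(1-3)] assms(4) by linarith
  then obtain x where x: "0 \<le> x" "x \<le> 1" "phi lam x = s"
    by (rule phi_surj_on[OF assms(1)]) (use assms(5) in simp)
  have "x < z"
  proof (rule ccontr)
    assume "\<not> x < z"
    then have "phi lam x \<le> phi lam z"
      using phi_antimono[of lam z x] assms x by simp
    with assms x show False
      by simp
  qed
  moreover have "x \<noteq> 0"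
    using x assms by auto
  ultimately show ?thesis
    using phi_pinv_phi[of lam x] assms x by simp
qed

lemma phi_3y_witness:
  assumes "lam > 0"
  obtains y where "0 < y" "3 * y < 1" "phi lam (3 * y) + phi lam 0 < 2 * phi lam y"
proof
  define y where "y = 3 powr (- (lam + 1) / lam)"
  show "0 < y"
    unfolding y_def by simp
  have "y < 3 powr (-1)"
    unfolding y_def using assms by (subst powr_less_cancel_iff) (auto simp: field_simps)
  then show "3 * y < 1"
    by (simp add: powr_minus)
  have "(3 * y) powr (lam + 1) = 3 powr (lam + 1) * 3 powr (- (lam + 1) / lam * (lam + 1))"
    unfolding y_def by (simp add: powr_mult powr_powr)
  also have "\<dots> = 3 powr ((lam + 1) + - (lam + 1) / lam * (lam + 1))"
    by (simp add: powr_add)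
  also have "(lam + 1) + - (lam + 1) / lam * (lam + 1) = - (lam + 1) / lam"
    using assms by (simp add: field_simps)
  finally have fixed_point: "(3 * y) powr (lam + 1) = y"
    unfolding y_def .
  have "phi lam (3 * y) + phi lam 0 - 2 * phi lam y
      = ((3 * y) powr (lam + 1) - 2 * y powr (lam + 1) - (lam + 1) * y) / (lam * (lam + 1))"
    unfolding phi_def by (simp add: divide_simps) (simp add: algebra_simps)
  also have "\<dots> = - (2 * y powr (lam + 1) + lam * y) / (lam * (lam + 1))"
    unfolding fixed_point by (simp add: algebra_simps)
  also have "\<dots> < 0"
  proof (rule divide_neg_pos)
    have "0 < y powr (lam + 1)" "0 < lam * y"
      using assms \<open>0 < y\<close> by simp_all
    then show "- (2 * y powr (lam + 1) + lam * y) < 0"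
      by linarith
  qed (use assms in simp)
  finally show "phi lam (3 * y) + phi lam 0 < 2 * phi lam y"
    by simp
qed

lemma C_lam_3_witness:
  assumes "lam > 0"
  obtains a b y where "0 \<le> a" "a \<le> b" "b \<le> 1"
    "phi_pinv lam (phi lam a + 2 * phi lam b) = y"
    "phi_pinv lam (2 * phi lam a + phi lam b) = 0"
    "phi_pinv lam (3 * phi lam b) < 3 * y"
proof -
  obtain y where y: "0 < y" "3 * y < 1" and gap: "phi lam (3 * y) + phi lam 0 < 2 * phi lam y"
    using phi_3y_witness[OF assms] .
  have y_bounds: "phi lam y < phi lam 0" "0 \<le> phi lam (3 * y)"
    using y assms phi_strict_antimono[of lam 0 y] phi_nonneg[of lam "3 * y"] by auto
  obtain a where a: "0 \<le> a" "a \<le> 1" "phi lam a = (2 * phi lam 0 - phi lam y) / 3"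
    by (rule phi_surj_on[OF assms, of "(2 * phi lam 0 - phi lam y) / 3"]) (use y_bounds gap in auto)
  obtain b where b: "0 \<le> b" "b \<le> 1" "phi lam b = (2 * phi lam y - phi lam 0) / 3"
    by (rule phi_surj_on[OF assms, of "(2 * phi lam y - phi lam 0) / 3"]) (use y_bounds gap in auto)
  show ?thesis
  proof
    show "a \<le> b"
      using phi_strict_antimono[OF assms, of b a] a b y_bounds by force
    have "phi lam a + 2 * phi lam b = phi lam y"
      using a b by simp
    then show "phi_pinv lam (phi lam a + 2 * phi lam b) = y"
      using phi_pinv_phi[OF assms, of y] y by simp
    have "2 * phi lam a + phi lam b = phi lam 0"
      using a b by simp
    then show "phi_pinv lam (2 * phi lam a + phi lam b) = 0"
      by (simp add: phi_pinv_eq_0)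
    show "phi_pinv lam (3 * phi lam b) < 3 * y"
      using phi_pinv_less[OF assms, of "3 * y"] y b gap y_bounds by simp
  qed (use a b in auto)
qed

lemma copula_sum_le_of_null_overlaps:
  fixes C :: "(nat \<Rightarrow> real) \<Rightarrow> real" and u :: "'k \<Rightarrow> nat \<Rightarrow> real"
  assumes "copula d C" "finite K"
    and u_box: "\<And>k. k \<in> K \<Longrightarrow> u k \<in> PiE {..<d} (\<lambda>_. {0..1})"
    and w_box: "w \<in> PiE {..<d} (\<lambda>_. {0..1})"
    and below: "\<And>k i. k \<in> K \<Longrightarrow> i < d \<Longrightarrow> u k i \<le> w i"
    and overlap: "\<And>k l. k \<in> K \<Longrightarrow> l \<in> K \<Longrightarrow> k \<noteq> l \<Longrightarrow>
      C (\<lambda>i. min (u k i) (u l i)) = 0"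
  shows "(\<Sum>k\<in>K. C (u k)) \<le> C w"
proof -
  obtain M where M: "prob_space M"
    and sets_M: "sets M = sets (PiM {..<d} (\<lambda>_. (borel :: real measure)))"
    and C_M: "\<And>v. v \<in> PiE {..<d} (\<lambda>_. {0..1}) \<Longrightarrow>
      C v = measure M {x \<in> space M. \<forall>i<d. x i \<le> v i}"
    using \<open>copula d C\<close> unfolding copula_def by blast
  interpret prob_space M by (fact M)
  define orthant where "orthant v = {x \<in> space M. \<forall>i<d. x i \<le> v i}" for v :: "nat \<Rightarrow> real"
  have orthant_sets: "orthant v \<in> sets M" for v
  proof -
    have "{x \<in> space (PiM {..<d} (\<lambda>_. borel)). \<forall>i\<in>{..<d}. x i \<le> v i}
        \<in> sets (PiM {..<d} (\<lambda>_. (borel :: real measure)))"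
      by measurable
    then show ?thesis
      unfolding orthant_def sets_eq_imp_space_eq[OF sets_M] sets_M by simp
  qed
  have min_box: "(\<lambda>i. min (u k i) (u l i)) \<in> PiE {..<d} (\<lambda>_. {0..1})"
    if "k \<in> K" "l \<in> K" for k l
    using u_box[OF that(1)] u_box[OF that(2)] by (auto simp: PiE_iff extensional_def min_le_iff_disj)
  have disjoint: "pairwise (\<lambda>k l. AE x in M. x \<notin> orthant (u k) \<or> x \<notin> orthant (u l)) K"
  proof (rule pairwiseI)
    fix k l assume kl: "k \<in> K" "l \<in> K" "k \<noteq> l"
    have "orthant (u k) \<inter> orthant (u l) = orthant (\<lambda>i. min (u k i) (u l i))"
      unfolding orthant_def by auto
    moreover have "measure M (orthant (\<lambda>i. min (u k i) (u l i))) = 0"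
      using C_M[OF min_box] overlap kl unfolding orthant_def by simp
    ultimately have "orthant (u k) \<inter> orthant (u l) \<in> null_sets M"
      using orthant_sets by (auto intro!: null_setsI simp: emeasure_eq_measure)
    then have "AE x in M. x \<notin> orthant (u k) \<inter> orthant (u l)"
      by (rule AE_not_in)
    then show "AE x in M. x \<notin> orthant (u k) \<or> x \<notin> orthant (u l)"
      by (rule eventually_mono) blast
  qed
  have fmeasurable: "orthant v \<in> fmeasurable M" for v
    unfolding fmeasurable_eq_sets by (rule orthant_sets)
  have union: "measure M (\<Union>k\<in>K. orthant (u k)) = (\<Sum>k\<in>K. measure M (orthant (u k)))"
    by (rule measure_UNION_AE[where F = "\<lambda>k. orthant (u k)", OF \<open>finite K\<close> fmeasurable disjoint])
  have "(\<Sum>k\<in>K. C (u k)) = (\<Sum>k\<in>K. measure M (orthant (u k)))"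
    using C_M u_box by (simp add: orthant_def)
  also have "\<dots> = measure M (\<Union>k\<in>K. orthant (u k))"
    by (rule union[symmetric])
  also have "\<dots> \<le> measure M (orthant w)"
  proof (rule finite_measure_mono[OF _ orthant_sets])
    have "orthant (u k) \<subseteq> orthant w" if "k \<in> K" for k
      unfolding orthant_def using below[OF that] by (blast intro: order_trans)
    then show "(\<Union>k\<in>K. orthant (u k)) \<subseteq> orthant w"
      by blast
  qed
  also have "\<dots> = C w"
    using C_M[OF w_box] unfolding orthant_def ..
  finally show ?thesis .
qed

text \<open>Coordinates from \<open>d\<close> on are \<open>undefined\<close>, as required for membership in \<open>PiE {..<d}\<close>.\<close>
definition lift_point :: "nat \<Rightarrow> nat \<Rightarrow> (nat \<Rightarrow> real) \<Rightarrow> nat \<Rightarrow> real" where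
  "lift_point d m c i = (if i < d then if i < m then c i else 1 else undefined)"

lemma lift_point_in_unit_cube:
  "(\<And>i. i < m \<Longrightarrow> c i \<in> {0..1}) \<Longrightarrow> lift_point d m c \<in> PiE {..<d} (\<lambda>_. {0..1})"
  by (auto simp: lift_point_def PiE_iff extensional_def)

lemma min_lift_two_valued:
  fixes a b :: real
  assumes "a \<le> b"
  shows "(\<lambda>i. min (lift_point d m (\<lambda>j. if j \<in> S then a else b) i)
                  (lift_point d m (\<lambda>j. if j \<in> T then a else b) i))
    = lift_point d m (\<lambda>j. if j \<in> S \<union> T then a else b)"
  using assms by (auto simp: lift_point_def min_def)

lemma C_lam_lift_point:
  assumes "m \<le> d"
  shows "C_lam lam d (lift_point d m c) = C_lam lam m c"
proof -
  have "(\<Sum>i<d. phi lam (lift_point d m c i)) = (\<Sum>i<m. phi lam (lift_point d m c i))"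
    using assms by (intro sum.mono_neutral_right) (auto simp: lift_point_def phi_1)
  also have "\<dots> = (\<Sum>i<m. phi lam (c i))"
    using assms by (intro sum.cong) (auto simp: lift_point_def)
  finally show ?thesis
    unfolding C_lam_def by simp
qed

lemma C_lam_two_valued:
  assumes "S \<subseteq> {..<m}"
  shows "C_lam lam m (\<lambda>i. if i \<in> S then a else b)
    = phi_pinv lam (card S * phi lam a + (m - card S) * phi lam b)"
proof -
  have "(\<Sum>i<m. phi lam (if i \<in> S then a else b))
      = (\<Sum>i<m. if i \<in> S then phi lam a else phi lam b)"
    by (intro sum.cong) simp_all
  also have "\<dots> = card ({..<m} \<inter> S) * phi lam a + card ({..<m} - S) * phi lam b"
    by (simp add: sum.If_cases Diff_eq)
  also have "\<dots> = card S * phi lam a + (m - card S) * phi lam b"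
    using assms by (simp add: Int_absorb1 card_Diff_subset finite_subset)
  finally show ?thesis
    unfolding C_lam_def by simp
qed

theorem theorem5:
  fixes lam :: real and d :: nat
  assumes "lam > 0" and "d \<ge> 3"
  shows "\<not> copula d (C_lam lam d)"
proof
  assume copula: "copula d (C_lam lam d)"
  obtain a b y where ab: "0 \<le> a" "a \<le> b" "b \<le> 1"
    and single: "phi_pinv lam (phi lam a + 2 * phi lam b) = y"
    and double: "phi_pinv lam (2 * phi lam a + phi lam b) = 0"
    and none: "phi_pinv lam (3 * phi lam b) < 3 * y"
    using C_lam_3_witness[OF \<open>lam > 0\<close>] .
  define v where "v S = lift_point d 3 (\<lambda>i. if i \<in> S then a else b)" for S :: "nat set"
  have C_v: "C_lam lam d (v S) = phi_pinv lam (card S * phi lam a + (3 - card S) * phi lam b)"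
    if "S \<subseteq> {..<3}" for S
    using \<open>d \<ge> 3\<close> that by (simp add: v_def C_lam_lift_point C_lam_two_valued)
  have v_in_cube: "v S \<in> PiE {..<d} (\<lambda>_. {0..1})" for S
    unfolding v_def using ab by (intro lift_point_in_unit_cube) auto
  have "(\<Sum>k\<in>{0, 1, 2}. C_lam lam d (v {k})) \<le> C_lam lam d (v {})"
  proof (rule copula_sum_le_of_null_overlaps[OF copula _ v_in_cube v_in_cube])
    show "v {k} i \<le> v {} i" for k i
      using ab by (simp add: v_def lift_point_def)
    show "C_lam lam d (\<lambda>i. min (v {k} i) (v {l} i)) = 0"
      if "k \<in> {0, 1, 2}" "l \<in> {0, 1, 2}" "k \<noteq> l" for k l :: nat
      using that C_v[of "{k} \<union> {l}"] double
      unfolding v_def min_lift_two_valued[OF \<open>a \<le> b\<close>] by auto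
  qed simp_all
  moreover have "(\<Sum>k\<in>{0, 1, 2}. C_lam lam d (v {k})) = 3 * y"
    using C_v single by simp
  ultimately show False
    using C_v[of "{}"] none by simp
qed

end
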